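(* Let $G$ be a finite simple bipartite graph with bipartition $(X,Y)$ such that no vertex in $X$ is adjacent to every vertex of $Y$. Then $$\sum\left(\frac{|X|d(x)-|Y|d(y)}{(|X|-d(y))(|Y|-d(x))}\;:\; x\in X,\ y\in Y,\ xy\notin E(G)\right)\geq 0.$$
   Context: $d(v)$ denotes the degree of a vertex $v$ in $G$; the sum ranges over all pairs $(x,y)$ with $x\in X$, $y\in Y$ and $x,y$ non-adjacent. *)

theory Defs
  imports Complex_Main
begin

definition bipartite_graph :: "'a set \<Rightarrow> 'a set \<Rightarrow> ('a \<Rightarrow> 'a \<Rightarrow> bool) \<Rightarrow> bool" where
  "bipartite_graph X Y E \<longleftrightarrow>
     finite X \<and> finite Y \<and> X \<inter> Y = {} \<and>
     (\<forall>u v. E u v \<longrightarrow> E v u) \<and>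
     (\<forall>u v. E u v \<longrightarrow> (u \<in> X \<and> v \<in> Y) \<or> (u \<in> Y \<and> v \<in> X))"

definition degree :: "'a set \<Rightarrow> 'a set \<Rightarrow> ('a \<Rightarrow> 'a \<Rightarrow> bool) \<Rightarrow> 'a \<Rightarrow> nat" where
  "degree X Y E v = card {u \<in> X \<union> Y. E v u}"

end

theory Submission
  imports Defs
begin

text \<open>For a non-edge \<open>xy\<close> write \<open>a = |Y| - d(x)\<close> and \<open>b = |X| - d(y)\<close> for the numbers of
  non-neighbours of \<open>x\<close> and of \<open>y\<close>. The summand splits as \<open>|Y|/a - |X|/b\<close>. Summing the first
  part over the \<open>a\<close> non-neighbours of each \<open>x\<close> gives exactly \<open>|X||Y|\<close>, because every \<open>a\<close> is
  positive; summing the second part over the \<open>b\<close> non-neighbours of each \<open>y\<close> gives at most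
  \<open>|X||Y|\<close>, with a loss for every \<open>y\<close> adjacent to all of \<open>X\<close>.\<close>

lemma diff_divide_diff_eq:
  fixes m n a b :: real
  assumes "m \<noteq> b" and "n \<noteq> a"
  shows "(m * a - n * b) / ((m - b) * (n - a)) = n / (n - a) - m / (m - b)"
  using assms by (simp add: field_simps)

lemma sum_divide_card_eq:
  fixes c :: real
  assumes "finite A" and "A \<noteq> {}"
  shows "(\<Sum>_\<in>A. c / real (card A)) = c"
  using assms by simp

lemma sum_divide_card_le:
  fixes c :: real
  assumes "0 \<le> c"
  shows "(\<Sum>_\<in>A. c / real (card A)) \<le> c"
  using assms by (cases "A = {}") simp_all

lemma real_card_filter_not:
  assumes "finite A"
  shows "real (card {a\<in>A. \<not> P a}) = real (card A) - real (card {a\<in>A. P a})"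
proof -
  have "{a\<in>A. \<not> P a} = A - {a\<in>A. P a}" by blast
  moreover have "card (A - {a\<in>A. P a}) = card A - card {a\<in>A. P a}"
    using assms by (intro card_Diff_subset) auto
  moreover have "card {a\<in>A. P a} \<le> card A"
    using assms by (intro card_mono) auto
  ultimately show ?thesis by (simp add: of_nat_diff)
qed

lemma bipartite_graph_degree_left:
  assumes "bipartite_graph X Y E" and "x \<in> X"
  shows "degree X Y E x = card {y\<in>Y. E x y}"
proof -
  have "{u \<in> X \<union> Y. E x u} = {y\<in>Y. E x y}"
    using assms unfolding bipartite_graph_def by blast
  then show ?thesis unfolding degree_def by simp
qed

lemma bipartite_graph_degree_right:
  assumes "bipartite_graph X Y E" and "y \<in> Y"
  shows "degree X Y E y = card {x\<in>X. E x y}"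
proof -
  have "{u \<in> X \<union> Y. E y u} = {x\<in>X. E x y}"
    using assms unfolding bipartite_graph_def by blast
  then show ?thesis unfolding degree_def by simp
qed

lemma bipartite_graph_card_non_neighbours_left:
  assumes "bipartite_graph X Y E" and "x \<in> X"
  shows "real (card {y\<in>Y. \<not> E x y}) = real (card Y) - real (degree X Y E x)"
  using assms real_card_filter_not[of Y "E x"]
  by (simp add: bipartite_graph_def bipartite_graph_degree_left)

lemma bipartite_graph_card_non_neighbours_right:
  assumes "bipartite_graph X Y E" and "y \<in> Y"
  shows "real (card {x\<in>X. \<not> E x y}) = real (card X) - real (degree X Y E y)"
  using assms real_card_filter_not[of X "\<lambda>x. E x y"]
  by (simp add: bipartite_graph_def bipartite_graph_degree_right)

lemma bipartite_graph_non_edge_term_eq: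
  assumes G: "bipartite_graph X Y E" and "x \<in> X" "y \<in> Y" "\<not> E x y"
  shows "(real (card X) * real (degree X Y E x) - real (card Y) * real (degree X Y E y))
          / ((real (card X) - real (degree X Y E y)) * (real (card Y) - real (degree X Y E x)))
       = real (card Y) / real (card {y'\<in>Y. \<not> E x y'})
         - real (card X) / real (card {x'\<in>X. \<not> E x' y})"
proof -
  have "finite X" "finite Y" using G by (simp_all add: bipartite_graph_def)
  then have "card {y'\<in>Y. \<not> E x y'} > 0" "card {x'\<in>X. \<not> E x' y} > 0"
    using assms by (auto simp: card_gt_0_iff)
  with bipartite_graph_card_non_neighbours_left[OF G \<open>x \<in> X\<close>]
    bipartite_graph_card_non_neighbours_right[OF G \<open>y \<in> Y\<close>]
  show ?thesis by (simp add: diff_divide_diff_eq)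
qed

theorem proposition6p2:
  fixes X Y :: "'a set" and E :: "'a \<Rightarrow> 'a \<Rightarrow> bool"
  assumes "bipartite_graph X Y E"
    and "\<forall>x\<in>X. \<exists>y\<in>Y. \<not> E x y"
  shows "(\<Sum>(x, y) \<in> {(x, y). x \<in> X \<and> y \<in> Y \<and> \<not> E x y}.
            (real (card X) * real (degree X Y E x) - real (card Y) * real (degree X Y E y))
            / ((real (card X) - real (degree X Y E y)) * (real (card Y) - real (degree X Y E x))))
         \<ge> 0"
proof -
  let ?m = "real (card X)" and ?n = "real (card Y)"
  let ?Nx = "\<lambda>x. {y\<in>Y. \<not> E x y}" and ?Ny = "\<lambda>y. {x\<in>X. \<not> E x y}"
  have fin: "finite X" "finite Y" using assms(1) by (simp_all add: bipartite_graph_def)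
  have non_edges: "{(x, y). x \<in> X \<and> y \<in> Y \<and> \<not> E x y} = Sigma X ?Nx" by auto
  have "0 = (\<Sum>x\<in>X. ?n) - (\<Sum>y\<in>Y. ?m)" by simp
  also have "\<dots> \<le> (\<Sum>x\<in>X. \<Sum>_\<in>?Nx x. ?n / real (card (?Nx x)))
      - (\<Sum>y\<in>Y. \<Sum>_\<in>?Ny y. ?m / real (card (?Ny y)))"
  proof (rule diff_mono)
    show "(\<Sum>x\<in>X. ?n) \<le> (\<Sum>x\<in>X. \<Sum>_\<in>?Nx x. ?n / real (card (?Nx x)))"
      using assms(2) fin by (intro sum_mono eq_refl sum_divide_card_eq[symmetric]) auto
    show "(\<Sum>y\<in>Y. \<Sum>_\<in>?Ny y. ?m / real (card (?Ny y))) \<le> (\<Sum>y\<in>Y. ?m)"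
      by (intro sum_mono sum_divide_card_le) simp
  qed
  also have "\<dots> = (\<Sum>(x, y) \<in> Sigma X ?Nx. ?n / real (card (?Nx x)) - ?m / real (card (?Ny y)))"
    using fin by (simp add: sum_subtractf sum.Sigma[symmetric] sum.swap_restrict[of X Y])
  also have "\<dots> = (\<Sum>(x, y) \<in> Sigma X ?Nx.
          (?m * degree X Y E x - ?n * degree X Y E y)
          / ((?m - degree X Y E y) * (?n - degree X Y E x)))"
    by (intro sum.cong refl) (auto simp: bipartite_graph_non_edge_term_eq[OF assms(1)])
  finally show ?thesis unfolding non_edges .
qed

end
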